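(* Let $1\le k\le d$ and let $\mu$ be a probability distribution on $Q_d$ with $w_i^0\ge \frac34-\frac1{4k}$ for all $i\in[d]$. Then $(\mathbf 0,\mathbf 0)$ is a $k$-local equilibrium.
   Context: $Q_d=\{0,1\}^d$ with the Hamming distance $d(X,Y)=|\{i: x_i\neq y_i\}|$. A probability distribution on $Q_d$ is a function $\mu:Q_d\to\mathbb R_{\ge0}$ with $\sum_{V\in Q_d}\mu(V)=1$, extended to subsets by $\mu(\mathcal A)=\sum_{V\in\mathcal A}\mu(V)$. For $A,B\in Q_d$ let $V(A,B)=\{X\in Q_d: d(X,A)<d(X,B)\}$ and $T(A,B)=\{X\in Q_d: d(X,A)=d(X,B)\}$. The payoffs in position $(A,B)$ are $P_1(A,B)=\mu(V(A,B))+\frac12\mu(T(A,B))$ and $P_2(A,B)=\mu(V(B,A))+\frac12\mu(T(A,B))$. The pair $(A,B)$ is a $k$-local equilibrium if $P_1(A,B)\ge P_1(A',B)$ for all $A'\in Q_d$ with $d(A,A')\le k$ and $P_2(A,B)\ge P_2(A,B')$ for all $B'\in Q_d$ with $d(B,B')\le k$. For $i\in[d]$, $w_i^0=\mu(\{X\in Q_d: x_i=0\})$. $\mathbf 0=(0,\dots,0)$. *)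

theory Defs
  imports Main "HOL-Library.Multiset" Complex_Main
begin

text \<open>Points of Q_d are boolean lists of length d (False = 0, True = 1); coordinates are indexed 0..d-1.\<close>

definition cube :: "nat \<Rightarrow> bool list set" where
  "cube d = {xs. length xs = d}"

definition hamming :: "bool list \<Rightarrow> bool list \<Rightarrow> nat" where
  "hamming xs ys = card {i. i < length xs \<and> xs ! i \<noteq> ys ! i}"

definition is_distribution :: "nat \<Rightarrow> (bool list \<Rightarrow> real) \<Rightarrow> bool" where
  "is_distribution d \<mu> \<longleftrightarrow> (\<forall>v\<in>cube d. \<mu> v \<ge> 0) \<and> (\<Sum>v\<in>cube d. \<mu> v) = 1"

definition measure_of :: "(bool list \<Rightarrow> real) \<Rightarrow> bool list set \<Rightarrow> real" where
  "measure_of \<mu> S = (\<Sum>v\<in>S. \<mu> v)"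

definition Vor :: "nat \<Rightarrow> bool list \<Rightarrow> bool list \<Rightarrow> bool list set" where
  "Vor d A B = {X\<in>cube d. hamming X A < hamming X B}"

definition Tie :: "nat \<Rightarrow> bool list \<Rightarrow> bool list \<Rightarrow> bool list set" where
  "Tie d A B = {X\<in>cube d. hamming X A = hamming X B}"

definition payoff1 :: "nat \<Rightarrow> (bool list \<Rightarrow> real) \<Rightarrow> bool list \<Rightarrow> bool list \<Rightarrow> real" where
  "payoff1 d \<mu> A B = measure_of \<mu> (Vor d A B) + measure_of \<mu> (Tie d A B) / 2"

definition payoff2 :: "nat \<Rightarrow> (bool list \<Rightarrow> real) \<Rightarrow> bool list \<Rightarrow> bool list \<Rightarrow> real" where
  "payoff2 d \<mu> A B = measure_of \<mu> (Vor d B A) + measure_of \<mu> (Tie d A B) / 2"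

definition local_equilibrium :: "nat \<Rightarrow> nat \<Rightarrow> (bool list \<Rightarrow> real) \<Rightarrow> bool list \<Rightarrow> bool list \<Rightarrow> bool" where
  "local_equilibrium d k \<mu> A B \<longleftrightarrow>
     (\<forall>A'\<in>cube d. hamming A A' \<le> k \<longrightarrow> payoff1 d \<mu> A B \<ge> payoff1 d \<mu> A' B) \<and>
     (\<forall>B'\<in>cube d. hamming B B' \<le> k \<longrightarrow> payoff2 d \<mu> A B \<ge> payoff2 d \<mu> A B')"

definition w0 :: "nat \<Rightarrow> (bool list \<Rightarrow> real) \<Rightarrow> nat \<Rightarrow> real" where
  "w0 d \<mu> i = measure_of \<mu> {X\<in>cube d. X ! i = False}"

definition zero_pt :: "nat \<Rightarrow> bool list" where
  "zero_pt d = replicate d False"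

end

theory Submission
  imports Defs
begin

text \<open>
  Let \<open>A \<noteq> \<zero>\<close> have support \<open>S\<close> of size \<open>m \<le> k\<close>, and for a voter \<open>X\<close> let \<open>a = |supp X \<inter> S|\<close>.
  Then \<open>d(X,A) - d(X,\<zero>) = m - 2a\<close>, so \<open>X\<close> prefers \<open>A\<close> only if \<open>2a > m\<close> and ties only if \<open>2a = m\<close>;
  in both cases its contribution to the payoff of \<open>A\<close> is at most \<open>2a/(m+1)\<close>.  Taking expectations,
  the payoff of \<open>A\<close> is at most \<open>2/(m+1) \<cdot> \<Sum>i\<in>S. (1 - w\<^sub>i\<^sup>0) \<le> 2m/(m+1) \<cdot> (k+1)/(4k) \<le> 1/2\<close>,
  which is the payoff of staying at \<open>\<zero>\<close>.  The second player is symmetric.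
\<close>

lemma finite_cube: "finite (cube d)"
proof -
  have "finite {xs::bool list. set xs \<subseteq> UNIV \<and> length xs = d}"
    by (rule finite_lists_length_eq) simp
  then show ?thesis unfolding cube_def by simp
qed

definition ones :: "bool list \<Rightarrow> nat set" where
  "ones X = {i. i < length X \<and> X ! i}"

lemma finite_ones: "finite (ones X)"
  unfolding ones_def by simp

lemma hamming_eq_card_sym_diff:
  assumes "length Y = length X"
  shows "hamming X Y = card ((ones X \<union> ones Y) - (ones X \<inter> ones Y))"
  unfolding hamming_def ones_def using assms by (intro arg_cong[where f = card]) auto

lemma hamming_sym:
  assumes "length Y = length X"
  shows "hamming X Y = hamming Y X"
  using assms by (simp add: hamming_eq_card_sym_diff Un_commute Int_commute)

lemma hamming_add_overlap:
  assumes "length Y = length X"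
  shows "hamming X Y + 2 * card (ones X \<inter> ones Y) = card (ones X) + card (ones Y)"
proof -
  have "card ((ones X \<union> ones Y) - (ones X \<inter> ones Y))
          = card (ones X \<union> ones Y) - card (ones X \<inter> ones Y)"
    by (rule card_Diff_subset) (auto simp: finite_ones)
  moreover have "card (ones X \<inter> ones Y) \<le> card (ones X \<union> ones Y)"
    by (rule card_mono) (auto simp: finite_ones)
  ultimately show ?thesis
    using card_Un_Int[OF finite_ones finite_ones, of X Y] hamming_eq_card_sym_diff[OF assms]
    by linarith
qed

lemma ones_zero_pt: "ones (zero_pt d) = {}"
  unfolding ones_def zero_pt_def by simp

lemma hamming_zero_pt:
  assumes "length X = d"
  shows "hamming X (zero_pt d) = card (ones X)"
proof -
  have "length (zero_pt d) = length X" using assms by (simp add: zero_pt_def)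
  then show ?thesis using hamming_add_overlap[of "zero_pt d" X] by (simp add: ones_zero_pt)
qed

definition score :: "nat \<Rightarrow> nat \<Rightarrow> real" where
  "score p q = (if p < q then 1 else if p = q then 1/2 else 0)"

lemma payoff1_eq_sum_score:
  "payoff1 d \<mu> A B = (\<Sum>X\<in>cube d. \<mu> X * score (hamming X A) (hamming X B))"
proof -
  have "payoff1 d \<mu> A B
          = (\<Sum>X\<in>cube d. if hamming X A < hamming X B then \<mu> X else 0)
            + (\<Sum>X\<in>cube d. if hamming X A = hamming X B then \<mu> X else 0) / 2"
    unfolding payoff1_def measure_of_def Vor_def Tie_def
    using finite_cube by (simp add: sum.inter_filter)
  also have "\<dots> = (\<Sum>X\<in>cube d. \<mu> X * score (hamming X A) (hamming X B))"
    unfolding score_def sum_divide_distrib sum.distrib[symmetric] by (rule sum.cong) auto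
  finally show ?thesis .
qed

lemma payoff2_eq_payoff1_swap: "payoff2 d \<mu> A B = payoff1 d \<mu> B A"
proof -
  have "Tie d A B = Tie d B A" unfolding Tie_def by auto
  then show ?thesis unfolding payoff1_def payoff2_def by simp
qed

lemma payoff1_self:
  assumes "is_distribution d \<mu>"
  shows "payoff1 d \<mu> A A = 1/2"
  using assms unfolding payoff1_eq_sum_score score_def is_distribution_def
  by (simp flip: sum_divide_distrib)

lemma measure_coordinate_true:
  assumes "is_distribution d \<mu>"
  shows "(\<Sum>X\<in>cube d. if X ! i then \<mu> X else 0) = 1 - w0 d \<mu> i"
proof -
  have "w0 d \<mu> i = (\<Sum>X\<in>cube d. if \<not> X ! i then \<mu> X else 0)"
    unfolding w0_def measure_of_def using finite_cube by (simp add: sum.inter_filter)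
  moreover have "(\<Sum>X\<in>cube d. if X ! i then \<mu> X else 0)
                   + (\<Sum>X\<in>cube d. if \<not> X ! i then \<mu> X else 0) = (\<Sum>X\<in>cube d. \<mu> X)"
    unfolding sum.distrib[symmetric] by (rule sum.cong) auto
  ultimately show ?thesis using assms unfolding is_distribution_def by linarith
qed

lemma expected_overlap:
  assumes "is_distribution d \<mu>" and "S \<subseteq> {..<d}"
  shows "(\<Sum>X\<in>cube d. \<mu> X * card (ones X \<inter> S)) = (\<Sum>i\<in>S. 1 - w0 d \<mu> i)"
proof -
  have fin: "finite S" using assms(2) finite_subset by blast
  have "real (card (ones X \<inter> S)) = (\<Sum>i\<in>S. if X ! i then 1 else 0)" if "X \<in> cube d" for X
  proof -
    have "ones X \<inter> S = {i\<in>S. X ! i}"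
      using that assms(2) unfolding ones_def cube_def by auto
    then show ?thesis using fin by (simp add: sum.inter_filter[symmetric])
  qed
  then have "(\<Sum>X\<in>cube d. \<mu> X * card (ones X \<inter> S))
               = (\<Sum>i\<in>S. \<Sum>X\<in>cube d. if X ! i then \<mu> X else 0)"
    by (simp add: sum_distrib_left sum.swap[of _ S] if_distrib cong: if_cong)
  then show ?thesis using measure_coordinate_true[OF assms(1)] by simp
qed

lemma score_le_overlap:
  assumes "1 \<le> m" and "p + 2 * a = q + m"
  shows "score p q \<le> 2 * real a / (real m + 1)"
proof -
  have "p < q \<Longrightarrow> real m + 1 \<le> 2 * real a" using assms(2) by linarith
  moreover have "p = q \<Longrightarrow> real m + 1 \<le> 2 * (2 * real a)" using assms by linarith
  ultimately show ?thesis unfolding score_def by (auto simp: field_simps)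
qed

lemma deviation_bound_le_half:
  fixes x y :: real
  assumes "0 < y" and "0 \<le> x" and "x \<le> y"
  shows "2 / (x + 1) * (x * (1/4 + 1 / (4 * y))) \<le> 1/2"
proof -
  have pos: "0 < 2 * ((x + 1) * y)" using assms(1,2) by simp
  have "2 / (x + 1) * (x * (1/4 + 1 / (4 * y))) = x * (y + 1) / (2 * ((x + 1) * y))"
    using assms(1,2) by (simp add: field_simps add_nonneg_eq_0_iff)
  also have "\<dots> \<le> 1/2"
    using assms(3) pos by (simp add: divide_le_eq algebra_simps)
  finally show ?thesis .
qed

lemma payoff1_deviation_from_zero_le_half:
  assumes "1 \<le> k" and dist: "is_distribution d \<mu>"
    and w: "\<forall>i<d. w0 d \<mu> i \<ge> 3/4 - 1 / (4 * real k)"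
    and A: "A \<in> cube d" and near: "hamming (zero_pt d) A \<le> k"
  shows "payoff1 d \<mu> A (zero_pt d) \<le> 1/2"
proof (cases "A = zero_pt d")
  case True
  then show ?thesis using payoff1_self[OF dist] by simp
next
  case False
  define S where "S = ones A"
  define m where "m = card S"
  have lenA: "length A = d" using A unfolding cube_def by simp
  have S_sub: "S \<subseteq> {..<d}" unfolding S_def ones_def using lenA by auto
  have "m = hamming (zero_pt d) A"
    using hamming_zero_pt[OF lenA] hamming_sym[of "zero_pt d" A] lenA
    unfolding m_def S_def zero_pt_def by simp
  then have "m \<le> k" using near by simp
  have "S \<noteq> {}"
    using False lenA unfolding S_def ones_def zero_pt_def by (auto intro: nth_equalityI)
  then have "1 \<le> m" unfolding m_def S_def using finite_ones by (simp add: Suc_le_eq card_gt_0_iff)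
  have score_le: "score (hamming X A) (hamming X (zero_pt d)) \<le> 2 * real (card (ones X \<inter> S)) / (real m + 1)"
    if "X \<in> cube d" for X
  proof (rule score_le_overlap[OF \<open>1 \<le> m\<close>])
    have "length X = d" using that unfolding cube_def by simp
    then show "hamming X A + 2 * card (ones X \<inter> S) = hamming X (zero_pt d) + m"
      using hamming_add_overlap[of A X] hamming_zero_pt[of X d] lenA unfolding S_def m_def by simp
  qed
  have mu_nonneg: "X \<in> cube d \<Longrightarrow> 0 \<le> \<mu> X" for X
    using dist unfolding is_distribution_def by simp
  have "payoff1 d \<mu> A (zero_pt d) \<le> (\<Sum>X\<in>cube d. \<mu> X * (2 * real (card (ones X \<inter> S)) / (real m + 1)))"
    unfolding payoff1_eq_sum_score by (intro sum_mono mult_left_mono score_le mu_nonneg)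
  also have "\<dots> = 2 / (real m + 1) * (\<Sum>i\<in>S. 1 - w0 d \<mu> i)"
    by (simp add: expected_overlap[OF dist S_sub, symmetric] sum_distrib_left field_simps)
  also have "\<dots> \<le> 2 / (real m + 1) * (real m * (1/4 + 1 / (4 * real k)))"
  proof -
    have "(\<Sum>i\<in>S. 1 - w0 d \<mu> i) \<le> (\<Sum>i\<in>S. 1/4 + 1 / (4 * real k))"
      using w S_sub by (intro sum_mono) fastforce
    then show ?thesis unfolding m_def by (intro mult_left_mono) auto
  qed
  also have "\<dots> \<le> 1/2"
    using \<open>1 \<le> k\<close> \<open>m \<le> k\<close> by (intro deviation_bound_le_half) simp_all
  finally show ?thesis .
qed

theorem mainTheorem4:
  fixes d k :: nat and \<mu> :: "bool list \<Rightarrow> real"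
  assumes "1 \<le> k" and "k \<le> d"
    and "is_distribution d \<mu>"
    and "\<forall>i<d. w0 d \<mu> i \<ge> 3/4 - 1 / (4 * real k)"
  shows "local_equilibrium d k \<mu> (zero_pt d) (zero_pt d)"
proof -
  have deviation: "payoff1 d \<mu> A (zero_pt d) \<le> payoff1 d \<mu> (zero_pt d) (zero_pt d)"
    if "A \<in> cube d" and "hamming (zero_pt d) A \<le> k" for A
    using payoff1_deviation_from_zero_le_half[OF assms(1,3,4) that] payoff1_self[OF assms(3), of "zero_pt d"]
    by linarith
  show ?thesis
    unfolding local_equilibrium_def payoff2_eq_payoff1_swap
    by (intro conjI ballI impI; rule deviation)
qed

end
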